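(* Let $K\ge 4$ be even and let $\bar t:=K-t$ be even with $2\le \bar t\le K/2$, where $t=KM/N$. Then the D2D coded caching rate $R=N/M-1$ is achievable with some subpacketization $F$ satisfying $F\le F_{\rm JCM}$ and $$\frac{F}{F_{\rm JCM}}\le \min\Big\{\frac{1}{t}\prod_{i=1}^{\bar t/2}(2i-1),\;1\Big\}.$$
   Context: D2D coded caching setting: there are $N\ge 1$ files $W_1,\dots,W_N$ and $K\ge 2$ users, each with a cache of size $M$ files, $0<M\le N$, and $t:=KM/N$ is assumed to be a positive integer. A D2D coded caching scheme with (uncoded placement and) subpacketization $F\in\mathbb{N}_+$ is defined as follows. Fix a packet size $b\ge 1$; each file is a sequence of $F$ packets $W_n=(W_n^{(1)},\dots,W_n^{(F)})$, $W_n^{(j)}\in\{0,1\}^b$. Placement: each user $k\in[K]$ stores the packets $\{W_n^{(j)}:(n,j)\in Z_k\}$ for a fixed index set $Z_k\subseteq[N]\times[F]$ with $|Z_k|\le MF$ (independent of demands and file contents). Delivery: for every demand vector $\mathbf d=(d_1,\dots,d_K)\in[N]^K$, each user $k$ broadcasts to all other users $\ell_k(\mathbf d)\in\mathbb{N}$ blocks in $\{0,1\}^b$, each a deterministic function of the packets stored by user $k$; it is required that for all file contents each user $k$ can recover all $F$ packets of $W_{d_k}$ from its stored packets and the blocks sent by the other users. The rate is $R=\max_{\mathbf d}\frac{1}{F}\sum_{k=1}^K\ell_k(\mathbf d)$ (transmitted bits normalized by the file size $Fb$). The rate $R$ is achievable with subpacketization $F$ if such a scheme with rate $R$ exists for every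 packet size $b\ge 1$. Define $F_{\rm JCM}:=t\binom{K}{t}$. *)

theory Defs
  imports Complex_Main "HOL-Library.FuncSet"
begin

text \<open>Indices: files n \<in> {1..N}, packets j \<in> {1..F}, users k \<in> {1..K}.
  A packet of size b is a bool list of length b.  File contents are a map
  W :: nat \<times> nat \<Rightarrow> bool list, W (n,j) being the j-th packet of file n.\<close>

definition valid_contents :: "nat \<Rightarrow> nat \<Rightarrow> nat \<Rightarrow> (nat \<times> nat \<Rightarrow> bool list) \<Rightarrow> bool" where
  "valid_contents N F b W \<longleftrightarrow> (\<forall>n\<in>{1..N}. \<forall>j\<in>{1..F}. length (W (n, j)) = b)"

definition cache_view :: "(nat \<times> nat) set \<Rightarrow> (nat \<times> nat \<Rightarrow> bool list) \<Rightarrow> (nat \<times> nat \<Rightarrow> bool list)" where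
  "cache_view Zk W = (\<lambda>p. if p \<in> Zk then W p else [])"

definition demands :: "nat \<Rightarrow> nat \<Rightarrow> (nat \<Rightarrow> nat) set" where
  "demands N K = {1..K} \<rightarrow>\<^sub>E {1..N}"

text \<open>Z k : placement index set of user k;
  l d k : number of blocks broadcast by user k under demand d;
  enc d k : encoder of user k, applied to the cache content of user k;
  dec d k : decoder of user k, given its own cache content and the blocks
            sent by the other users (indexed by sender), returning packet j.\<close>
definition D2D_scheme ::
  "nat \<Rightarrow> nat \<Rightarrow> real \<Rightarrow> nat \<Rightarrow> nat \<Rightarrow> (nat \<Rightarrow> (nat \<times> nat) set)
   \<Rightarrow> ((nat \<Rightarrow> nat) \<Rightarrow> nat \<Rightarrow> nat)
   \<Rightarrow> ((nat \<Rightarrow> nat) \<Rightarrow> nat \<Rightarrow> (nat \<times> nat \<Rightarrow> bool list) \<Rightarrow> bool list list)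
   \<Rightarrow> ((nat \<Rightarrow> nat) \<Rightarrow> nat \<Rightarrow> (nat \<times> nat \<Rightarrow> bool list) \<Rightarrow> (nat \<Rightarrow> bool list list) \<Rightarrow> nat \<Rightarrow> bool list)
   \<Rightarrow> bool" where
  "D2D_scheme N K M F b Z l enc dec \<longleftrightarrow>
     (\<forall>k\<in>{1..K}. Z k \<subseteq> {1..N} \<times> {1..F} \<and> real (card (Z k)) \<le> M * real F) \<and>
     (\<forall>d\<in>demands N K. \<forall>k\<in>{1..K}. \<forall>W. valid_contents N F b W \<longrightarrow>
         length (enc d k (cache_view (Z k) W)) = l d k \<and>
         (\<forall>x\<in>set (enc d k (cache_view (Z k) W)). length x = b)) \<and>
     (\<forall>d\<in>demands N K. \<forall>k\<in>{1..K}. \<forall>W. valid_contents N F b W \<longrightarrow>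
         (\<forall>j\<in>{1..F}.
            dec d k (cache_view (Z k) W)
                (\<lambda>k'. if k' \<in> {1..K} \<and> k' \<noteq> k then enc d k' (cache_view (Z k') W) else [])
                j = W (d k, j)))"

definition D2D_rate :: "nat \<Rightarrow> nat \<Rightarrow> nat \<Rightarrow> ((nat \<Rightarrow> nat) \<Rightarrow> nat \<Rightarrow> nat) \<Rightarrow> real" where
  "D2D_rate N K F l = Max ((\<lambda>d. (\<Sum>k\<in>{1..K}. real (l d k)) / real F) ` demands N K)"

definition D2D_achievable :: "nat \<Rightarrow> nat \<Rightarrow> real \<Rightarrow> real \<Rightarrow> nat \<Rightarrow> bool" where
  "D2D_achievable N K M R F \<longleftrightarrow>
     (\<forall>b\<ge>1. \<exists>Z l enc dec. D2D_scheme N K M F b Z l enc dec \<and> D2D_rate N K F l = R)"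

definition F_JCM :: "nat \<Rightarrow> nat \<Rightarrow> nat" where
  "F_JCM K t = t * (K choose t)"

end

theory Submission
  imports Defs "HOL-Combinatorics.Transposition"
begin

(* Let r = K - t. Label the packets of each file by r-sets A of users, a packet labelled A being
   cached exactly by the users outside A. For an (r - 1)-set B the t + 1 users outside B serve each
   other: an XOR sent by one of them to the t others carries, for each receiver u, a packet labelled
   insert u B, which all the other receivers cache. If c A packets carry label A and c satisfies a
   local balance condition at every B, such XORs deliver all missing packets at rate r / t with
   F = (sum of the c A); if moreover c is invariant under permutations of the users that move any
   user to any other, every cache has size M. Constant weights c = t give the Ji-Caire-Molisch
   scheme, F = t (K choose t). For r = 2 m and the users grouped in K / 2 pairs, weights w_j that
   depend on the number j of pairs inside A, with w_0 = (2m - 1)!! and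
   (2 (m - j) - 1) w_(j+1) = (2 (m - j) - 2) w_j, are balanced, whence F <= (K choose t) (2m - 1)!!.
   The better of the two schemes gives the bound. *)

section \<open>XOR-coded multicast\<close>

definition xor_packets :: "nat \<Rightarrow> 'u set \<Rightarrow> ('u \<Rightarrow> bool list) \<Rightarrow> bool list" where
  "xor_packets b U f = map (\<lambda>i. odd (card {u\<in>U. f u ! i})) [0..<b]"

definition xor_strip :: "bool list \<Rightarrow> 'u set \<Rightarrow> ('u \<Rightarrow> bool list) \<Rightarrow> bool list" where
  "xor_strip x U f = map2 (\<noteq>) x (xor_packets (length x) U f)"

lemma xor_packets_cong:
  assumes "\<And>u. u \<in> U \<Longrightarrow> f u = g u"
  shows "xor_packets b U f = xor_packets b U g"
proof -
  have "{u\<in>U. f u ! i} = {u\<in>U. g u ! i}" for i using assms by auto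
  then show ?thesis by (simp add: xor_packets_def)
qed

lemma xor_strip_cong:
  assumes "\<And>u. u \<in> U \<Longrightarrow> f u = g u"
  shows "xor_strip x U f = xor_strip x U g"
proof -
  have "xor_packets (length x) U f = xor_packets (length x) U g"
    by (rule xor_packets_cong) (rule assms)
  then show ?thesis by (simp add: xor_strip_def)
qed

lemma odd_card_filter_remove:
  assumes "finite U" "k \<in> U"
  shows "odd (card {u\<in>U. P u}) \<longleftrightarrow> odd (card {u\<in>U - {k}. P u}) \<noteq> P k"
proof -
  have "{u\<in>U. P u} = (if P k then insert k {u\<in>U - {k}. P u} else {u\<in>U - {k}. P u})"
    using assms by auto
  then show ?thesis using assms by auto
qed

lemma xor_strip_xor_packets:
  assumes "finite U" "k \<in> U" "length (f k) = b"
  shows "xor_strip (xor_packets b U f) (U - {k}) f = f k"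
proof (rule nth_equalityI)
  fix i assume "i < length (xor_strip (xor_packets b U f) (U - {k}) f)"
  then have "i < b" by (simp add: xor_strip_def xor_packets_def)
  then show "xor_strip (xor_packets b U f) (U - {k}) f ! i = f k ! i"
    using odd_card_filter_remove[OF assms(1,2), of "\<lambda>u. f u ! i"]
    by (auto simp: xor_strip_def xor_packets_def)
qed (simp add: xor_strip_def xor_packets_def assms)

lemma sum_length_filter_fibres:
  assumes "g ` set xs \<subseteq> S" "finite S"
  shows "(\<Sum>k\<in>S. length (filter (\<lambda>x. g x = k) xs)) = length xs"
  using assms
proof (induction xs)
  case (Cons x xs)
  have "(\<Sum>k\<in>S. length (filter (\<lambda>y. g y = k) (x # xs)))
      = (\<Sum>k\<in>S. (if g x = k then 1 else 0) + length (filter (\<lambda>y. g y = k) xs))"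
    by (intro sum.cong) auto
  also have "\<dots> = 1 + length xs" using Cons by (simp add: sum.distrib)
  finally show ?case by simp
qed simp

section \<open>Schemes from transmission plans\<close>

definition first_index :: "'a list \<Rightarrow> 'a \<Rightarrow> nat" where
  "first_index xs x = length (takeWhile (\<lambda>y. y \<noteq> x) xs)"

lemma first_index_less: "x \<in> set xs \<Longrightarrow> first_index xs x < length xs"
  unfolding first_index_def by (induction xs) auto

lemma nth_first_index: "x \<in> set xs \<Longrightarrow> xs ! first_index xs x = x"
  using first_index_less nth_length_takeWhile unfolding first_index_def by fastforce

text \<open>A transmission plan prescribes the XORs of a scheme independently of the demands:
  \<open>needers j\<close> is the set of users that do not cache the \<open>j\<close>-th packet of the files, and the
  transmission \<open>\<rho>\<close> is the XOR, over its receivers \<open>u\<close>, of packet \<open>packet \<rho> u\<close> of the file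
  demanded by \<open>u\<close>.\<close>
locale transmission_plan =
  fixes K F :: nat and needers :: "nat \<Rightarrow> nat set" and transmissions :: "'r set"
    and sender :: "'r \<Rightarrow> nat" and receivers :: "'r \<Rightarrow> nat set" and packet :: "'r \<Rightarrow> nat \<Rightarrow> nat"
  assumes finite_transmissions: "finite transmissions"
    and sender_user: "\<rho> \<in> transmissions \<Longrightarrow> sender \<rho> \<in> {1..K}"
    and receivers_users: "\<rho> \<in> transmissions \<Longrightarrow> receivers \<rho> \<subseteq> {1..K}"
    and sender_not_receiver: "\<rho> \<in> transmissions \<Longrightarrow> sender \<rho> \<notin> receivers \<rho>"
    and packet_index: "\<rho> \<in> transmissions \<Longrightarrow> u \<in> receivers \<rho> \<Longrightarrow> packet \<rho> u \<in> {1..F}"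
    and sender_has_packet:
      "\<rho> \<in> transmissions \<Longrightarrow> u \<in> receivers \<rho> \<Longrightarrow> sender \<rho> \<notin> needers (packet \<rho> u)"
    and receiver_has_other_packets:
      "\<rho> \<in> transmissions \<Longrightarrow> u \<in> receivers \<rho> \<Longrightarrow> v \<in> receivers \<rho> \<Longrightarrow> v \<noteq> u \<Longrightarrow>
        v \<notin> needers (packet \<rho> u)"
    and needs_delivered:
      "k \<in> {1..K} \<Longrightarrow> j \<in> {1..F} \<Longrightarrow> k \<in> needers j \<Longrightarrow>
        \<exists>\<rho>\<in>transmissions. k \<in> receivers \<rho> \<and> packet \<rho> k = j"
begin

definition placement :: "nat \<Rightarrow> nat \<Rightarrow> (nat \<times> nat) set" where
  "placement N k = {1..N} \<times> {j\<in>{1..F}. k \<notin> needers j}"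

definition transmission_list :: "'r list" where
  "transmission_list = (SOME xs. set xs = transmissions \<and> distinct xs)"

definition sent_by :: "nat \<Rightarrow> 'r list" where
  "sent_by k = filter (\<lambda>\<rho>. sender \<rho> = k) transmission_list"

definition encoder ::
  "nat \<Rightarrow> (nat \<Rightarrow> nat) \<Rightarrow> nat \<Rightarrow> (nat \<times> nat \<Rightarrow> bool list) \<Rightarrow> bool list list" where
  "encoder b d k V =
     map (\<lambda>\<rho>. xor_packets b (receivers \<rho>) (\<lambda>u. V (d u, packet \<rho> u))) (sent_by k)"

definition block_index :: "'r \<Rightarrow> nat" where
  "block_index \<rho> = first_index (sent_by (sender \<rho>)) \<rho>"

definition delivering_transmission :: "nat \<Rightarrow> nat \<Rightarrow> 'r" where
  "delivering_transmission k j =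
     (SOME \<rho>. \<rho> \<in> transmissions \<and> k \<in> receivers \<rho> \<and> packet \<rho> k = j)"

definition decoder :: "(nat \<Rightarrow> nat) \<Rightarrow> nat \<Rightarrow> (nat \<times> nat \<Rightarrow> bool list) \<Rightarrow>
    (nat \<Rightarrow> bool list list) \<Rightarrow> nat \<Rightarrow> bool list" where
  "decoder d k V received j =
     (if k \<notin> needers j then V (d k, j)
      else let \<rho> = delivering_transmission k j
           in xor_strip (received (sender \<rho>) ! block_index \<rho>)
                (receivers \<rho> - {k}) (\<lambda>u. V (d u, packet \<rho> u)))"

lemma transmission_list: "set transmission_list = transmissions" "distinct transmission_list"
proof -
  have "\<exists>xs. set xs = transmissions \<and> distinct xs"
    using finite_distinct_list[OF finite_transmissions] .
  then show "set transmission_list = transmissions" "distinct transmission_list"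
    unfolding transmission_list_def by (metis (mono_tags, lifting) someI_ex)+
qed

lemma delivering_transmission:
  assumes "k \<in> {1..K}" "j \<in> {1..F}" "k \<in> needers j"
  shows "delivering_transmission k j \<in> transmissions" "k \<in> receivers (delivering_transmission k j)"
    "packet (delivering_transmission k j) k = j"
  using someI_ex[OF needs_delivered[OF assms, unfolded Bex_def]]
  unfolding delivering_transmission_def by blast+

lemma transmission_in_sent_by: "\<rho> \<in> transmissions \<Longrightarrow> \<rho> \<in> set (sent_by (sender \<rho>))"
  using transmission_list by (simp add: sent_by_def)

lemma sum_length_sent_by: "(\<Sum>k\<in>{1..K}. length (sent_by k)) = card transmissions"
proof -
  have "sender ` set transmission_list \<subseteq> {1..K}" using sender_user transmission_list by auto
  then show ?thesis
    using sum_length_filter_fibres[of sender transmission_list "{1..K}"] transmission_list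
      distinct_card[of transmission_list]
    by (simp add: sent_by_def)
qed

lemma card_placement: "card (placement N k) = N * card {j\<in>{1..F}. k \<notin> needers j}"
  by (simp add: placement_def card_cartesian_product)

lemma encoder_blocks:
  "length (encoder b d k V) = length (sent_by k)" "x \<in> set (encoder b d k V) \<Longrightarrow> length x = b"
  by (auto simp: encoder_def xor_packets_def)

lemma demand_file: "d \<in> demands N K \<Longrightarrow> u \<in> {1..K} \<Longrightarrow> d u \<in> {1..N}"
  by (auto simp: demands_def)

lemma encoder_block_index:
  assumes \<rho>: "\<rho> \<in> transmissions" and d: "d \<in> demands N K"
  shows "encoder b d (sender \<rho>) (cache_view (placement N (sender \<rho>)) W) ! block_index \<rho>
           = xor_packets b (receivers \<rho>) (\<lambda>u. W (d u, packet \<rho> u))"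
proof -
  have "block_index \<rho> < length (sent_by (sender \<rho>))" "sent_by (sender \<rho>) ! block_index \<rho> = \<rho>"
    using first_index_less[OF transmission_in_sent_by[OF \<rho>]]
      nth_first_index[OF transmission_in_sent_by[OF \<rho>]]
    unfolding block_index_def by simp_all
  then have "encoder b d (sender \<rho>) (cache_view (placement N (sender \<rho>)) W) ! block_index \<rho>
      = xor_packets b (receivers \<rho>) (\<lambda>u. cache_view (placement N (sender \<rho>)) W (d u, packet \<rho> u))"
    by (simp add: encoder_def)
  also have "\<dots> = xor_packets b (receivers \<rho>) (\<lambda>u. W (d u, packet \<rho> u))"
  proof (rule xor_packets_cong)
    fix u assume u: "u \<in> receivers \<rho>"
    then have "d u \<in> {1..N}" using receivers_users[OF \<rho>] demand_file[OF d] by blast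
    then show "cache_view (placement N (sender \<rho>)) W (d u, packet \<rho> u) = W (d u, packet \<rho> u)"
      using packet_index[OF \<rho> u] sender_has_packet[OF \<rho> u]
      by (simp add: cache_view_def placement_def)
  qed
  finally show ?thesis .
qed

lemma decoder_correct:
  assumes d: "d \<in> demands N K" and k: "k \<in> {1..K}" and W: "valid_contents N F b W"
    and j: "j \<in> {1..F}"
  shows "decoder d k (cache_view (placement N k) W)
           (\<lambda>k'. if k' \<in> {1..K} \<and> k' \<noteq> k
                 then encoder b d k' (cache_view (placement N k') W) else [])
           j = W (d k, j)"
proof (cases "k \<in> needers j")
  case False
  then show ?thesis
    using demand_file[OF d k] j by (simp add: decoder_def cache_view_def placement_def)
next
  case True
  define \<rho> where "\<rho> = delivering_transmission k j"
  define f where "f u = W (d u, packet \<rho> u)" for u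
  have \<rho>: "\<rho> \<in> transmissions" "k \<in> receivers \<rho>" "packet \<rho> k = j"
    using delivering_transmission[OF k j True] unfolding \<rho>_def by blast+
  have sent: "sender \<rho> \<in> {1..K}" "sender \<rho> \<noteq> k"
    using sender_user[OF \<rho>(1)] sender_not_receiver[OF \<rho>(1)] \<rho>(2) by auto
  have receivers: "receivers \<rho> \<subseteq> {1..K}" "finite (receivers \<rho>)"
    using receivers_users[OF \<rho>(1)] by (auto intro: finite_subset)
  have own_view:
    "xor_strip x (receivers \<rho> - {k}) (\<lambda>u. cache_view (placement N k) W (d u, packet \<rho> u))
      = xor_strip x (receivers \<rho> - {k}) f" for x
  proof (rule xor_strip_cong)
    fix u assume u: "u \<in> receivers \<rho> - {k}"
    then have "d u \<in> {1..N}" using receivers demand_file[OF d] by blast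
    then show "cache_view (placement N k) W (d u, packet \<rho> u) = f u"
      using u packet_index[OF \<rho>(1)] receiver_has_other_packets[OF \<rho>(1), of u k] \<rho>(2)
      by (auto simp: cache_view_def placement_def f_def)
  qed
  have "length (f k) = b"
    using W demand_file[OF d k] j \<rho>(3) by (simp add: valid_contents_def f_def)
  then have "xor_strip (xor_packets b (receivers \<rho>) f) (receivers \<rho> - {k}) f = f k"
    by (rule xor_strip_xor_packets[OF receivers(2) \<rho>(2)])
  then show ?thesis
    using True sent own_view encoder_block_index[OF \<rho>(1) d, of b W] \<rho>(3)
    unfolding decoder_def Let_def \<rho>_def[symmetric] f_def by simp
qed

lemma achievable:
  assumes "N \<ge> 1"
    and cache: "\<And>k. k \<in> {1..K} \<Longrightarrow> real N * real (card {j\<in>{1..F}. k \<notin> needers j}) \<le> M * real F"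
  shows "D2D_achievable N K M (real (card transmissions) / real F) F"
  unfolding D2D_achievable_def
proof (intro allI impI)
  fix b :: nat
  define l where "l (d :: nat \<Rightarrow> nat) k = length (sent_by k)" for d k
  have "placement N k \<subseteq> {1..N} \<times> {1..F} \<and> real (card (placement N k)) \<le> M * real F"
    if "k \<in> {1..K}" for k
    using cache[OF that] by (auto simp: card_placement placement_def)
  then have "D2D_scheme N K M F b (placement N) l (encoder b) decoder"
    unfolding D2D_scheme_def using encoder_blocks decoder_correct by (simp add: l_def)
  moreover have "D2D_rate N K F l = real (card transmissions) / real F"
  proof -
    have "(\<lambda>k\<in>{1..K}. 1) \<in> demands N K" using \<open>N \<ge> 1\<close> by (simp add: demands_def)
    then have "(\<lambda>d. (\<Sum>k\<in>{1..K}. real (l d k)) / real F) ` demands N K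
        = {real (card transmissions) / real F}"
      using sum_length_sent_by by (auto simp: l_def simp flip: of_nat_sum)
    then show ?thesis by (simp add: D2D_rate_def)
  qed
  ultimately show "\<exists>Z l enc dec. D2D_scheme N K M F b Z l enc dec \<and>
      D2D_rate N K F l = real (card transmissions) / real F"
    by blast
qed

end

section \<open>Delivery designs\<close>

abbreviation user_subsets :: "nat \<Rightarrow> nat \<Rightarrow> nat set set" where
  "user_subsets K r \<equiv> {A. A \<subseteq> {1..K} \<and> card A = r}"

lemma finite_user_subsets: "finite {A. A \<subseteq> {1..K::nat} \<and> P A}"
  by (rule finite_subset[of _ "Pow {1..K}"]) auto

lemma card_user_subsets: "card (user_subsets K r) = K choose r"
  using n_subsets[of "{1..K}" r] by simp

lemma card_compl_user_subset: "A \<in> user_subsets K r \<Longrightarrow> card ({1..K} - A) = K - r"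
  by (auto simp: card_Diff_subset finite_subset[of A "{1..K}"])

lemma sum_user_subsets_insert:
  fixes f :: "nat set \<Rightarrow> 'a :: comm_semiring_1"
  assumes "r \<ge> 1"
  shows "(\<Sum>B\<in>user_subsets K (r - 1). \<Sum>u\<in>{1..K} - B. f (insert u B))
           = of_nat r * (\<Sum>A\<in>user_subsets K r. f A)"
proof -
  let ?Bs = "user_subsets K (r - 1)" and ?As = "user_subsets K r"
  have "(\<Sum>B\<in>?Bs. \<Sum>u\<in>{1..K} - B. f (insert u B))
      = (\<Sum>(B, u)\<in>Sigma ?Bs (\<lambda>B. {1..K} - B). f (insert u B))"
    by (rule sum.Sigma) (auto simp: finite_user_subsets)
  also have "\<dots> = (\<Sum>(A, u)\<in>Sigma ?As (\<lambda>A. A). f A)"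
  proof (rule sum.reindex_bij_witness[where i="\<lambda>(A, u). (A - {u}, u)"
        and j="\<lambda>(B, u). (insert u B, u)"])
    fix p assume p: "p \<in> Sigma ?As (\<lambda>A. A)"
    then have "finite (fst p)"
      using rev_finite_subset[OF finite_atLeastAtMost, of "fst p" 1 K] by auto
    with p show "(case p of (A, u) \<Rightarrow> (A - {u}, u)) \<in> Sigma ?Bs (\<lambda>B. {1..K} - B)"
      by (cases p) auto
  next
    fix p assume p: "p \<in> Sigma ?Bs (\<lambda>B. {1..K} - B)"
    then have "finite (fst p)"
      using rev_finite_subset[OF finite_atLeastAtMost, of "fst p" 1 K] by auto
    with p show "(case p of (B, u) \<Rightarrow> (insert u B, u)) \<in> Sigma ?As (\<lambda>A. A)"
      using assms by (cases p) auto
  qed auto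
  also have "\<dots> = (\<Sum>A\<in>?As. \<Sum>u\<in>A. f A)"
    by (rule sum.Sigma[symmetric])
      (auto simp: finite_user_subsets intro: rev_finite_subset[OF finite_atLeastAtMost])
  also have "\<dots> = (\<Sum>A\<in>?As. of_nat r * f A)" by (intro sum.cong) auto
  finally show ?thesis by (simp add: sum_distrib_left)
qed

text \<open>In a delivery design, \<open>c A\<close> packets of every file are cached by exactly the users
  outside the \<open>r\<close>-set \<open>A\<close>. For an \<open>(r - 1)\<close>-set \<open>B\<close>, every user \<open>s\<close> outside \<open>B\<close>
  broadcasts \<open>X B - c (insert s B)\<close> XORs to the other \<open>K - r\<close> users outside \<open>B\<close>; the equation
  makes these \<open>X B\<close> messages carry to each user \<open>u\<close> outside \<open>B\<close> the \<open>c (insert u B)\<close> packets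
  it misses.\<close>
definition delivery_design :: "nat \<Rightarrow> nat \<Rightarrow> (nat set \<Rightarrow> nat) \<Rightarrow> (nat set \<Rightarrow> nat) \<Rightarrow> bool" where
  "delivery_design K r c X \<longleftrightarrow>
     (\<forall>B\<in>user_subsets K (r - 1).
        (\<Sum>u\<in>{1..K} - B. c (insert u B)) = (K - r) * X B \<and>
        (\<forall>u\<in>{1..K} - B. c (insert u B) \<le> X B))"

definition cache_balanced :: "nat \<Rightarrow> nat \<Rightarrow> (nat set \<Rightarrow> nat) \<Rightarrow> bool" where
  "cache_balanced K r c \<longleftrightarrow>
     (\<forall>k\<in>{1..K}.
        K * (\<Sum>A\<in>{A\<in>user_subsets K r. k \<notin> A}. c A) \<le> (K - r) * (\<Sum>A\<in>user_subsets K r. c A))"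

lemma delivery_design_load:
  assumes "delivery_design K r c X" "r \<ge> 1"
  shows "(K - r) * (\<Sum>B\<in>user_subsets K (r - 1). X B) = r * (\<Sum>A\<in>user_subsets K r. c A)"
proof -
  have "(K - r) * (\<Sum>B\<in>user_subsets K (r - 1). X B)
      = (\<Sum>B\<in>user_subsets K (r - 1). \<Sum>u\<in>{1..K} - B. c (insert u B))"
    using assms(1) by (simp add: delivery_design_def sum_distrib_left)
  then show ?thesis using sum_user_subsets_insert[OF assms(2), where K=K and f=c] by simp
qed

lemma delivery_design_slots_total:
  assumes design: "delivery_design K r c X" and "1 \<le> r" "r \<le> K"
    and B: "B \<in> user_subsets K (r - 1)"
  shows "(\<Sum>s\<in>{1..K} - B. X B - c (insert s B)) = X B"
proof -
  have card: "card ({1..K} - B) = K - r + 1"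
    using card_compl_user_subset[OF B] assms(2,3) by simp
  have le: "\<forall>s\<in>{1..K} - B. c (insert s B) \<le> X B"
    and sum: "(\<Sum>s\<in>{1..K} - B. c (insert s B)) = (K - r) * X B"
    using design B by (auto simp: delivery_design_def)
  have "(\<Sum>s\<in>{1..K} - B. X B - c (insert s B)) + (\<Sum>s\<in>{1..K} - B. c (insert s B))
      = (\<Sum>s\<in>{1..K} - B. X B)"
    unfolding sum.distrib[symmetric] using le by (intro sum.cong) auto
  then show ?thesis using sum card by (simp add: algebra_simps)
qed

lemma delivery_design_slots:
  assumes design: "delivery_design K r c X" and r: "1 \<le> r" "r \<le> K"
    and B: "B \<in> user_subsets K (r - 1)" and u: "u \<in> {1..K} - B"
  shows "(\<Sum>s\<in>{1..K} - B - {u}. X B - c (insert s B)) = c (insert u B)"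
proof -
  have "X B = (X B - c (insert u B)) + (\<Sum>s\<in>{1..K} - B - {u}. X B - c (insert s B))"
    using delivery_design_slots_total[OF design r B] u by (simp add: sum.remove)
  moreover have "c (insert u B) \<le> X B" using design B u by (auto simp: delivery_design_def)
  ultimately show ?thesis by linarith
qed

lemma ex_labelling:
  assumes "finite S"
  shows "\<exists>lab. (\<forall>j\<in>{1..sum c S}. lab j \<in> S) \<and>
           (\<forall>x\<in>S. card {j\<in>{1..sum c S}. lab j = x} = c x)"
proof -
  define L where "L = Sigma S (\<lambda>x. {..<c x})"
  have "card L = sum c S" using assms by (simp add: L_def)
  then obtain e where e: "bij_betw e {1..sum c S} L"
    using ex_bij_betw_nat_finite_1[of L] assms by (auto simp: L_def)
  have count: "card {j\<in>{1..sum c S}. fst (e j) = x} = c x" if "x \<in> S" for x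
  proof -
    have "bij_betw e {j\<in>{1..sum c S}. fst (e j) = x} {p\<in>L. fst p = x}"
      by (rule bij_betw_subset[OF e]) (use e in \<open>auto simp: bij_betw_def\<close>)
    moreover have "{p\<in>L. fst p = x} = {x} \<times> {..<c x}" using that by (auto simp: L_def)
    ultimately show ?thesis by (simp add: bij_betw_same_card card_cartesian_product)
  qed
  have range: "fst (e j) \<in> S" if "j \<in> {1..sum c S}" for j
  proof -
    have "e j \<in> L" using bij_betwE[OF e] that by blast
    then show ?thesis by (cases "e j") (simp add: L_def)
  qed
  show ?thesis
    using count range by (intro exI[of _ "\<lambda>j. fst (e j)"] conjI ballI) simp_all
qed

lemma card_labels_with:
  assumes "finite J" "finite S" and "\<And>j. j \<in> J \<Longrightarrow> lab j \<in> S"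
  shows "card {j\<in>J. P (lab j)} = (\<Sum>x\<in>{x\<in>S. P x}. card {j\<in>J. lab j = x})"
proof -
  have "{j\<in>J. P (lab j)} = (\<Union>x\<in>{x\<in>S. P x}. {j\<in>J. lab j = x})" using assms(3) by auto
  also have "card \<dots> = (\<Sum>x\<in>{x\<in>S. P x}. card {j\<in>J. lab j = x})"
    using assms(1,2) by (intro card_UN_disjoint) auto
  finally show ?thesis .
qed

definition design_slots ::
  "nat \<Rightarrow> (nat set \<Rightarrow> nat) \<Rightarrow> (nat set \<Rightarrow> nat) \<Rightarrow> nat set \<Rightarrow> nat \<Rightarrow> (nat \<times> nat) set" where
  "design_slots K c X B u = Sigma ({1..K} - B - {u}) (\<lambda>s. {..<X B - c (insert s B)})"

definition design_transmissions ::
  "nat \<Rightarrow> nat \<Rightarrow> (nat set \<Rightarrow> nat) \<Rightarrow> (nat set \<Rightarrow> nat) \<Rightarrow> (nat set \<times> nat \<times> nat) set" where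
  "design_transmissions K r c X =
     Sigma (user_subsets K (r - 1)) (\<lambda>B. Sigma ({1..K} - B) (\<lambda>s. {..<X B - c (insert s B)}))"

lemma card_design_transmissions:
  assumes "delivery_design K r c X" "1 \<le> r" "r \<le> K"
  shows "card (design_transmissions K r c X) = (\<Sum>B\<in>user_subsets K (r - 1). X B)"
  using delivery_design_slots_total[OF assms]
  by (simp add: design_transmissions_def finite_user_subsets)

lemma ex_slot_bijections:
  fixes F :: nat
  assumes design: "delivery_design K r c X" and r: "1 \<le> r" "r \<le> K"
    and lab_count: "\<And>A. A \<in> user_subsets K r \<Longrightarrow> card {j\<in>{1..F}. lab j = A} = c A"
  shows "\<exists>\<phi>. \<forall>B\<in>user_subsets K (r - 1). \<forall>u\<in>{1..K} - B.
           bij_betw (\<phi> B u) (design_slots K c X B u) {j\<in>{1..F}. lab j = insert u B}"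
proof -
  have bij: "\<exists>\<phi>. bij_betw \<phi> (design_slots K c X B u) {j\<in>{1..F}. lab j = insert u B}"
    if B: "B \<in> user_subsets K (r - 1)" and u: "u \<in> {1..K} - B" for B u
  proof -
    have "insert u B \<in> user_subsets K r"
      using B u r rev_finite_subset[OF finite_atLeastAtMost, of B 1 K] by auto
    then have "card (design_slots K c X B u) = card {j\<in>{1..F}. lab j = insert u B}"
      using lab_count delivery_design_slots[OF design r B u] by (simp add: design_slots_def)
    then show ?thesis by (intro finite_same_card_bij) (simp_all add: design_slots_def)
  qed
  let ?\<phi> = "\<lambda>B u. SOME \<phi>. bij_betw \<phi> (design_slots K c X B u) {j\<in>{1..F}. lab j = insert u B}"
  have "bij_betw (?\<phi> B u) (design_slots K c X B u) {j\<in>{1..F}. lab j = insert u B}"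
    if "B \<in> user_subsets K (r - 1)" "u \<in> {1..K} - B" for B u
    using someI_ex[OF bij[OF that]] .
  then show ?thesis by (intro exI[of _ ?\<phi>] ballI)
qed

lemma design_transmission_plan:
  assumes r: "1 \<le> r"
    and lab_range: "\<And>j. j \<in> {1..F} \<Longrightarrow> lab j \<in> user_subsets K r"
    and \<phi>: "\<forall>B\<in>user_subsets K (r - 1). \<forall>u\<in>{1..K} - B.
           bij_betw (\<phi> B u) (design_slots K c X B u) {j\<in>{1..F}. lab j = insert u B}"
  shows "transmission_plan K F lab (design_transmissions K r c X)
           (\<lambda>(B, s, i). s) (\<lambda>(B, s, i). {1..K} - B - {s}) (\<lambda>(B, s, i) u. \<phi> B u (s, i))"
proof
  show "finite (design_transmissions K r c X)"
    by (simp add: design_transmissions_def finite_user_subsets)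
next
  fix \<rho> assume "\<rho> \<in> design_transmissions K r c X"
  then show "(case \<rho> of (B, s, i) \<Rightarrow> s) \<in> {1..K}"
    "(case \<rho> of (B, s, i) \<Rightarrow> {1..K} - B - {s}) \<subseteq> {1..K}"
    "(case \<rho> of (B, s, i) \<Rightarrow> s) \<notin> (case \<rho> of (B, s, i) \<Rightarrow> {1..K} - B - {s})"
    by (auto simp: design_transmissions_def)
next
  fix \<rho> u assume \<rho>: "\<rho> \<in> design_transmissions K r c X"
    and u: "u \<in> (case \<rho> of (B, s, i) \<Rightarrow> {1..K} - B - {s})"
  obtain B s i where \<rho>_eq: "\<rho> = (B, s, i)" by (cases \<rho>)
  have B: "B \<in> user_subsets K (r - 1)" and s: "s \<in> {1..K} - B" and u': "u \<in> {1..K} - B" "u \<noteq> s"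
    and "(s, i) \<in> design_slots K c X B u"
    using \<rho> u by (auto simp: \<rho>_eq design_transmissions_def design_slots_def)
  then have "\<phi> B u (s, i) \<in> {j\<in>{1..F}. lab j = insert u B}"
    using \<phi> bij_betwE by blast
  then show "(case \<rho> of (B, s, i) \<Rightarrow> \<lambda>u. \<phi> B u (s, i)) u \<in> {1..F}"
    "(case \<rho> of (B, s, i) \<Rightarrow> s) \<notin> lab ((case \<rho> of (B, s, i) \<Rightarrow> \<lambda>u. \<phi> B u (s, i)) u)"
    "\<And>v. v \<in> (case \<rho> of (B, s, i) \<Rightarrow> {1..K} - B - {s}) \<Longrightarrow> v \<noteq> u \<Longrightarrow>
       v \<notin> lab ((case \<rho> of (B, s, i) \<Rightarrow> \<lambda>u. \<phi> B u (s, i)) u)"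
    using s u' by (auto simp: \<rho>_eq)
next
  fix k j assume k: "k \<in> {1..K}" and j: "j \<in> {1..F}" and kj: "k \<in> lab j"
  define B where "B = lab j - {k}"
  have B: "B \<in> user_subsets K (r - 1)" and kB: "k \<in> {1..K} - B" and "insert k B = lab j"
    using lab_range[OF j] kj k rev_finite_subset[OF finite_atLeastAtMost, of "lab j" 1 K]
    by (auto simp: B_def)
  then have "j \<in> \<phi> B k ` design_slots K c X B k" using \<phi> j by (simp add: bij_betw_def)
  then obtain s i where "(s, i) \<in> design_slots K c X B k" "\<phi> B k (s, i) = j" by auto
  then show "\<exists>\<rho>\<in>design_transmissions K r c X. k \<in> (case \<rho> of (B, s, i) \<Rightarrow> {1..K} - B - {s}) \<and>
      (case \<rho> of (B, s, i) \<Rightarrow> \<lambda>u. \<phi> B u (s, i)) k = j"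
    using B kB
    by (intro bexI[of _ "(B, s, i)"]) (auto simp: design_transmissions_def design_slots_def)
qed

lemma cache_fraction:
  fixes C F K t N :: nat
  assumes "K * C \<le> t * F" "0 < K" "0 < N" "real t = real K * M / real N"
  shows "real N * real C \<le> M * real F"
proof -
  have "real K * real C \<le> real t * real F"
    using assms(1) unfolding of_nat_mult[symmetric] of_nat_le_iff .
  then have "real N * (real K * real C) / real K \<le> real N * (real t * real F) / real K"
    by (intro divide_right_mono mult_left_mono) auto
  then show ?thesis using assms(2-4) by (simp add: field_simps)
qed

lemma D2D_achievable_from_design:
  assumes "N \<ge> 1" and r: "1 \<le> r" "r < K" and M: "real (K - r) = real K * M / real N"
    and design: "delivery_design K r c X" and balanced: "cache_balanced K r c"
    and nonzero: "(\<Sum>A\<in>user_subsets K r. c A) > 0"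
  shows "D2D_achievable N K M (real r / real (K - r)) (\<Sum>A\<in>user_subsets K r. c A)"
proof -
  define F where "F = (\<Sum>A\<in>user_subsets K r. c A)"
  obtain lab where lab_range: "\<And>j. j \<in> {1..F} \<Longrightarrow> lab j \<in> user_subsets K r"
    and lab_count: "\<And>A. A \<in> user_subsets K r \<Longrightarrow> card {j\<in>{1..F}. lab j = A} = c A"
    using ex_labelling[of "user_subsets K r" c, OF finite_user_subsets] unfolding F_def by blast
  obtain \<phi> where \<phi>: "\<forall>B\<in>user_subsets K (r - 1). \<forall>u\<in>{1..K} - B.
      bij_betw (\<phi> B u) (design_slots K c X B u) {j\<in>{1..F}. lab j = insert u B}"
    using ex_slot_bijections[OF design r(1) less_imp_le[OF r(2)] lab_count] by blast
  interpret transmission_plan K F lab "design_transmissions K r c X"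
    "\<lambda>(B, s, i). s" "\<lambda>(B, s, i). {1..K} - B - {s}" "\<lambda>(B, s, i) u. \<phi> B u (s, i)"
    by (rule design_transmission_plan[OF r(1) lab_range \<phi>])
  have "real N * real (card {j\<in>{1..F}. k \<notin> lab j}) \<le> M * real F" if "k \<in> {1..K}" for k
  proof (rule cache_fraction[OF _ _ _ M])
    have "card {j\<in>{1..F}. k \<notin> lab j} = (\<Sum>A\<in>{A\<in>user_subsets K r. k \<notin> A}. c A)"
      using card_labels_with[of "{1..F}" "user_subsets K r" lab "\<lambda>A. k \<notin> A",
          OF _ finite_user_subsets lab_range] lab_count
      by simp
    then show "K * card {j\<in>{1..F}. k \<notin> lab j} \<le> (K - r) * F"
      using balanced that unfolding cache_balanced_def F_def by simp
  qed (use r \<open>N \<ge> 1\<close> in auto)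
  then have "D2D_achievable N K M (real (card (design_transmissions K r c X)) / real F) F"
    by (rule achievable[OF \<open>N \<ge> 1\<close>])
  moreover have "(K - r) * card (design_transmissions K r c X) = r * F"
    using delivery_design_load[OF design r(1)]
      card_design_transmissions[OF design r(1) less_imp_le[OF r(2)]]
    by (simp add: F_def)
  then have "real (card (design_transmissions K r c X)) / real F = real r / real (K - r)"
    using nonzero r unfolding F_def[symmetric]
    by (simp add: field_simps flip: of_nat_mult of_nat_diff)
  ultimately show ?thesis by (simp add: F_def)
qed

section \<open>Cache balance from symmetry\<close>

lemma sum_user_subsets_avoiding:
  fixes c :: "nat set \<Rightarrow> nat"
  shows "(\<Sum>k\<in>{1..K}. \<Sum>A\<in>{A\<in>user_subsets K r. k \<notin> A}. c A)
           = (K - r) * (\<Sum>A\<in>user_subsets K r. c A)"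
proof -
  have "(\<Sum>k\<in>{1..K}. \<Sum>A\<in>{A\<in>user_subsets K r. k \<notin> A}. c A)
      = (\<Sum>A\<in>user_subsets K r. \<Sum>k\<in>{k\<in>{1..K}. k \<notin> A}. c A)"
    by (rule sum.swap_restrict) (simp_all add: finite_user_subsets)
  also have "\<dots> = (\<Sum>A\<in>user_subsets K r. (K - r) * c A)"
  proof (rule sum.cong)
    fix A assume "A \<in> user_subsets K r"
    then have "{k\<in>{1..K}. k \<notin> A} = {1..K} - A" "card ({1..K} - A) = K - r"
      using card_compl_user_subset by auto
    then show "(\<Sum>k\<in>{k\<in>{1..K}. k \<notin> A}. c A) = (K - r) * c A" by simp
  qed simp
  finally show ?thesis by (simp add: sum_distrib_left)
qed

lemma sum_user_subsets_avoiding_image: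
  assumes inv: "\<And>v. \<sigma> (\<sigma> v) = v" and into: "\<sigma> ` {1..K} \<subseteq> {1..K}" and "\<sigma> k = k'"
    and c_inv: "\<And>A. A \<in> user_subsets K r \<Longrightarrow> c (\<sigma> ` A) = c A"
  shows "(\<Sum>A\<in>{A\<in>user_subsets K r. k' \<notin> A}. c A) = (\<Sum>A\<in>{A\<in>user_subsets K r. k \<notin> A}. c A)"
proof -
  have "inj \<sigma>" using inv by (intro inj_on_inverseI[where g = \<sigma>]) simp
  have maps: "\<sigma> ` A \<in> {A\<in>user_subsets K r. \<sigma> u \<notin> A}" if A: "A \<in> user_subsets K r" "u \<notin> A" for A u
  proof -
    have "\<sigma> ` A \<subseteq> {1..K}" using A(1) into by auto
    moreover have "card (\<sigma> ` A) = r"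
      using A(1) card_image[OF inj_on_subset[OF \<open>inj \<sigma>\<close> subset_UNIV]] by simp
    moreover have "\<sigma> u \<notin> \<sigma> ` A" using A(2) \<open>inj \<sigma>\<close> by (simp add: inj_image_mem_iff)
    ultimately show ?thesis by simp
  qed
  show ?thesis
  proof (rule sum.reindex_bij_witness[where i="image \<sigma>" and j="image \<sigma>"])
    fix A assume "A \<in> {A\<in>user_subsets K r. k' \<notin> A}"
    then show "\<sigma> ` A \<in> {A\<in>user_subsets K r. k \<notin> A}" "c (\<sigma> ` A) = c A"
      using maps[of A k'] inv[of k] c_inv \<open>\<sigma> k = k'\<close> by auto
  next
    fix A assume "A \<in> {A\<in>user_subsets K r. k \<notin> A}"
    then show "\<sigma> ` A \<in> {A\<in>user_subsets K r. k' \<notin> A}" using maps[of A k] \<open>\<sigma> k = k'\<close> by simp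
  qed (simp_all add: image_image inv)
qed

lemma cache_balanced_if_symmetric:
  fixes c :: "nat set \<Rightarrow> nat"
  assumes sym: "\<And>k k'. k \<in> {1..K} \<Longrightarrow> k' \<in> {1..K} \<Longrightarrow> \<exists>\<sigma>. (\<forall>v. \<sigma> (\<sigma> v) = v) \<and>
      \<sigma> ` {1..K} \<subseteq> {1..K} \<and> \<sigma> k = k' \<and> (\<forall>A\<in>user_subsets K r. c (\<sigma> ` A) = c A)"
  shows "cache_balanced K r c"
  unfolding cache_balanced_def
proof
  fix k assume k: "k \<in> {1..K}"
  have "(\<Sum>A\<in>{A\<in>user_subsets K r. k' \<notin> A}. c A) = (\<Sum>A\<in>{A\<in>user_subsets K r. k \<notin> A}. c A)"
    if k': "k' \<in> {1..K}" for k'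
  proof -
    obtain \<sigma> where "\<forall>v. \<sigma> (\<sigma> v) = v" "\<sigma> ` {1..K} \<subseteq> {1..K}" "\<sigma> k = k'"
      "\<forall>A\<in>user_subsets K r. c (\<sigma> ` A) = c A"
      using sym[OF k k'] by blast
    then show ?thesis by (intro sum_user_subsets_avoiding_image[where \<sigma> = \<sigma>]) auto
  qed
  then have "K * (\<Sum>A\<in>{A\<in>user_subsets K r. k \<notin> A}. c A)
      = (\<Sum>k'\<in>{1..K}. \<Sum>A\<in>{A\<in>user_subsets K r. k' \<notin> A}. c A)"
    by simp
  then show "K * (\<Sum>A\<in>{A\<in>user_subsets K r. k \<notin> A}. c A) \<le> (K - r) * (\<Sum>A\<in>user_subsets K r. c A)"
    using sum_user_subsets_avoiding[where K = K and r = r and c = c] by simp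
qed

lemma cache_balanced_const: "cache_balanced K r (\<lambda>A. a)"
proof (rule cache_balanced_if_symmetric)
  fix k k' :: nat assume "k \<in> {1..K}" "k' \<in> {1..K}"
  then show "\<exists>\<sigma>. (\<forall>v. \<sigma> (\<sigma> v) = v) \<and> \<sigma> ` {1..K} \<subseteq> {1..K} \<and> \<sigma> k = k' \<and>
      (\<forall>A\<in>user_subsets K r. a = a)"
    by (intro exI[of _ "transpose k k'"]) (auto simp: transpose_def)
qed

lemma jcm_delivery_design:
  assumes "1 \<le> r" "r \<le> K"
  shows "delivery_design K r (\<lambda>A. K - r) (\<lambda>B. K - r + 1)"
  unfolding delivery_design_def
proof (intro ballI conjI)
  fix B assume "B \<in> user_subsets K (r - 1)"
  then have "card ({1..K} - B) = K - r + 1" using card_compl_user_subset assms by fastforce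
  then show "(\<Sum>u\<in>{1..K} - B. K - r) = (K - r) * (K - r + 1)" by simp
qed simp

lemma jcm_achievable:
  assumes "N \<ge> 1" "1 \<le> r" "r < K" "real (K - r) = real K * M / real N"
  shows "D2D_achievable N K M (real r / real (K - r)) ((K - r) * (K choose r))"
proof -
  have F: "(\<Sum>A\<in>user_subsets K r. K - r) = (K - r) * (K choose r)"
    using card_user_subsets[of K r] by simp
  have "(K - r) * (K choose r) > 0" using assms(2,3) by simp
  then show ?thesis
    using D2D_achievable_from_design[OF assms jcm_delivery_design cache_balanced_const] assms(2,3)
    unfolding F by simp
qed

section \<open>The pair-matching design\<close>

lemma even_card_involution:
  assumes "finite E" and "\<And>x. x \<in> E \<Longrightarrow> f x \<in> E" and "\<And>x. x \<in> E \<Longrightarrow> f (f x) = x"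
    and "\<And>x. x \<in> E \<Longrightarrow> f x \<noteq> x"
  shows "even (card E)"
  using assms
proof (induction E rule: finite_psubset_induct)
  case (psubset E)
  show ?case
  proof (cases "E = {}")
    case False
    then obtain x where x: "x \<in> E" by blast
    have "even (card (E - {x, f x}))"
    proof (rule psubset.IH)
      show "E - {x, f x} \<subset> E" using x by auto
      fix y assume "y \<in> E - {x, f x}"
      then show "f y \<in> E - {x, f x}" "f (f y) = y" "f y \<noteq> y"
        using psubset.prems x by (metis Diff_iff insertCI insertE singletonD)+
    qed
    moreover have "card E = card (E - {x, f x}) + 2"
    proof -
      have "f x \<noteq> x" "f x \<in> E" using x psubset.prems by auto
      then have pair: "{x, f x} \<subseteq> E" "card {x, f x} = 2" using x by auto
      then show ?thesis
        using card_mono[OF psubset.hyps pair(1)] card_Diff_subset[OF _ pair(1)] by simp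
    qed
    ultimately show ?thesis by simp
  qed simp
qed

text \<open>Since \<open>partner 0 = 0\<close>, the lemmas below assume \<open>v \<ge> 1\<close>.\<close>
definition partner :: "nat \<Rightarrow> nat" where
  "partner v = (if odd v then v + 1 else v - 1)"

lemma partner_partner: "v \<ge> 1 \<Longrightarrow> partner (partner v) = v"
  by (auto simp: partner_def)

lemma partner_neq: "v \<ge> 1 \<Longrightarrow> partner v \<noteq> v"
  by (auto simp: partner_def)

lemma partner_eq_iff: "v \<ge> 1 \<Longrightarrow> w \<ge> 1 \<Longrightarrow> partner v = w \<longleftrightarrow> v = partner w"
  using partner_partner by metis

lemma partner_user: "even K \<Longrightarrow> v \<in> {1..K} \<Longrightarrow> partner v \<in> {1..K}"
  by (cases "v = K") (auto simp: partner_def)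

definition matched_count :: "nat set \<Rightarrow> nat" where
  "matched_count A = card {v\<in>A. partner v \<in> A}"

lemma matched_count_even:
  assumes "finite A" "\<And>v. v \<in> A \<Longrightarrow> v \<ge> 1"
  shows "even (matched_count A)"
  unfolding matched_count_def
  by (rule even_card_involution[where f=partner]) (use assms partner_partner partner_neq in auto)

lemma matched_count_le: "finite A \<Longrightarrow> matched_count A \<le> card A"
  unfolding matched_count_def by (rule card_mono) auto

lemma matched_count_insert:
  assumes "u \<notin> A" "u \<ge> 1" "\<And>v. v \<in> A \<Longrightarrow> v \<ge> 1" "finite A"
  shows "matched_count (insert u A)
           = (if partner u \<in> A then matched_count A + 2 else matched_count A)"
proof -
  define E where "E = {v\<in>A. partner v \<in> A}"
  have pu: "partner u \<noteq> u" "partner (partner u) = u"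
    using assms(2) partner_neq partner_partner by auto
  have partner_to_u: "v \<in> A \<Longrightarrow> partner v = u \<longleftrightarrow> v = partner u" for v
    using assms(2,3) partner_eq_iff by blast
  show ?thesis
  proof (cases "partner u \<in> A")
    case True
    then have "{v\<in>insert u A. partner v \<in> insert u A} = insert u (insert (partner u) E)"
      using pu partner_to_u by (auto simp: E_def)
    moreover have "u \<notin> insert (partner u) E" "partner u \<notin> E"
      using assms(1) pu by (auto simp: E_def)
    moreover have "finite E" using assms(4) by (simp add: E_def)
    ultimately show ?thesis using True by (simp add: matched_count_def E_def[symmetric])
  next
    case False
    then have "{v\<in>insert u A. partner v \<in> insert u A} = E"
      using pu partner_to_u by (auto simp: E_def) (metis partner_to_u)
    then show ?thesis using False by (simp add: matched_count_def E_def[symmetric])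
  qed
qed

lemma card_partner_in:
  assumes "B \<subseteq> {1..K}" "even K"
  shows "card {u\<in>{1..K} - B. partner u \<in> B} = card B - matched_count B"
proof -
  have pos: "v \<in> B \<Longrightarrow> v \<ge> 1" for v using assms(1) by auto
  have "{u\<in>{1..K} - B. partner u \<in> B} = partner ` {v\<in>B. partner v \<notin> B}"
  proof (intro equalityI subsetI)
    fix u assume "u \<in> {u\<in>{1..K} - B. partner u \<in> B}"
    then show "u \<in> partner ` {v\<in>B. partner v \<notin> B}"
      using partner_partner[of u] by (intro image_eqI[of u partner "partner u"]) auto
  next
    fix u assume "u \<in> partner ` {v\<in>B. partner v \<notin> B}"
    then show "u \<in> {u\<in>{1..K} - B. partner u \<in> B}"
      using partner_user[OF assms(2)] partner_partner pos assms(1) by auto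
  qed
  moreover have "inj_on partner {v\<in>B. partner v \<notin> B}"
    by (rule inj_onI) (metis (no_types, lifting) mem_Collect_eq partner_partner pos)
  moreover have "card {v\<in>B. partner v \<notin> B} = card B - matched_count B"
  proof -
    have "{v\<in>B. partner v \<notin> B} = B - {v\<in>B. partner v \<in> B}" by auto
    then show ?thesis
      using finite_subset[OF assms(1)] by (simp add: card_Diff_subset matched_count_def)
  qed
  ultimately show ?thesis by (simp add: card_image)
qed

lemma matched_count_image:
  assumes "inj \<sigma>" and "\<And>v. v \<in> A \<Longrightarrow> \<sigma> (partner v) = partner (\<sigma> v)"
  shows "matched_count (\<sigma> ` A) = matched_count A"
proof -
  have "{w\<in>\<sigma> ` A. partner w \<in> \<sigma> ` A} = \<sigma> ` {v\<in>A. partner v \<in> A}"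
  proof (intro equalityI subsetI)
    fix w assume "w \<in> {w\<in>\<sigma> ` A. partner w \<in> \<sigma> ` A}"
    then obtain v where "v \<in> A" "w = \<sigma> v" "\<sigma> (partner v) \<in> \<sigma> ` A" using assms(2) by auto
    then show "w \<in> \<sigma> ` {v\<in>A. partner v \<in> A}" using assms(1) by (simp add: inj_image_mem_iff)
  next
    fix w assume "w \<in> \<sigma> ` {v\<in>A. partner v \<in> A}"
    then show "w \<in> {w\<in>\<sigma> ` A. partner w \<in> \<sigma> ` A}" using assms(2) by force
  qed
  then show ?thesis
    unfolding matched_count_def using assms(1) by (simp add: card_image inj_on_subset)
qed

definition pair_swap :: "nat \<Rightarrow> nat \<Rightarrow> nat \<Rightarrow> nat" where
  "pair_swap k k' v =
     (if v = k then k' else if v = k' then k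
      else if v = partner k then partner k' else if v = partner k' then partner k else v)"

lemma pair_swap_involution:
  assumes "k \<ge> 1" "k' \<ge> 1"
  shows "pair_swap k k' (pair_swap k k' v) = v"
  using assms partner_partner[of k] partner_partner[of k'] partner_neq[of k] partner_neq[of k']
    partner_eq_iff[of k k'] partner_eq_iff[of k' k]
  unfolding pair_swap_def by auto

lemma pair_swap_partner:
  assumes "k \<ge> 1" "k' \<ge> 1" "v \<ge> 1"
  shows "pair_swap k k' (partner v) = partner (pair_swap k k' v)"
  using assms partner_partner[of k] partner_partner[of k'] partner_partner[of v]
    partner_neq[of k] partner_neq[of k']
    partner_eq_iff[of v k] partner_eq_iff[of v k'] partner_eq_iff[of k k'] partner_eq_iff[of k' k]
  unfolding pair_swap_def by auto

lemma matching_cache_balanced: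
  assumes "even K"
  shows "cache_balanced K r (\<lambda>A. g (matched_count A))"
proof (rule cache_balanced_if_symmetric)
  fix k k' assume k: "k \<in> {1..K}" and k': "k' \<in> {1..K}"
  let ?\<sigma> = "pair_swap k k'"
  have inv: "\<forall>v. ?\<sigma> (?\<sigma> v) = v" using k k' pair_swap_involution by simp
  then have "inj ?\<sigma>" by (intro inj_on_inverseI[where g = ?\<sigma>]) simp
  have "?\<sigma> v \<in> {1..K}" if "v \<in> {1..K}" for v
    using that k k' partner_user[OF assms k] partner_user[OF assms k']
    unfolding pair_swap_def by simp
  then have "?\<sigma> ` {1..K} \<subseteq> {1..K}" by blast
  moreover have "matched_count (?\<sigma> ` A) = matched_count A" if "A \<in> user_subsets K r" for A
    by (rule matched_count_image[OF \<open>inj ?\<sigma>\<close>], rule pair_swap_partner) (use k k' that in auto)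
  ultimately show "\<exists>\<sigma>. (\<forall>v. \<sigma> (\<sigma> v) = v) \<and> \<sigma> ` {1..K} \<subseteq> {1..K} \<and> \<sigma> k = k' \<and>
      (\<forall>A\<in>user_subsets K r. g (matched_count (\<sigma> ` A)) = g (matched_count A))"
    using inv by (intro exI[of _ ?\<sigma>]) (simp add: pair_swap_def)
qed

text \<open>\<open>pair_weight m j\<close> is \<open>(2 m - 1)!!\<close> with its \<open>j\<close> largest factors \<open>2 i - 1\<close> lowered to
  \<open>2 i - 2\<close>; a \<open>2 m\<close>-set of users containing \<open>j\<close> pairs gets this weight.\<close>
definition pair_weight :: "nat \<Rightarrow> nat \<Rightarrow> nat" where
  "pair_weight m j = (\<Prod>i\<in>{1..m}. if m < i + j then 2 * i - 2 else 2 * i - 1)"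

abbreviation matching_weight :: "nat \<Rightarrow> nat set \<Rightarrow> nat" where
  "matching_weight m A \<equiv> pair_weight m (matched_count A div 2)"

lemma pair_weight_0: "pair_weight m 0 = (\<Prod>i\<in>{1..m}. 2 * i - 1)"
  unfolding pair_weight_def by (intro prod.cong) auto

lemma pair_weight_0_pos: "pair_weight m 0 > 0"
  unfolding pair_weight_0 by (intro prod_pos) auto

lemma pair_weight_le: "j \<le> j' \<Longrightarrow> pair_weight m j' \<le> pair_weight m j"
  unfolding pair_weight_def by (intro prod_mono) auto

lemma pair_weight_step:
  assumes "j < m"
  shows "(2 * (m - j) - 1) * pair_weight m (Suc j) = (2 * (m - j) - 2) * pair_weight m j"
proof -
  define i0 where "i0 = m - j"
  have i0: "i0 \<in> {1..m}" using assms by (simp add: i0_def)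
  define R where "R = (\<Prod>i\<in>{1..m} - {i0}. if m < i + j then 2 * i - 2 else 2 * i - (1::nat))"
  have "pair_weight m (Suc j) = (2 * i0 - 2) *
      (\<Prod>i\<in>{1..m} - {i0}. if m < i + Suc j then 2 * i - 2 else 2 * i - (1::nat))"
    unfolding pair_weight_def using assms by (subst prod.remove[OF _ i0]) (auto simp: i0_def)
  also have "(\<Prod>i\<in>{1..m} - {i0}. if m < i + Suc j then 2 * i - 2 else 2 * i - (1::nat)) = R"
    unfolding R_def by (intro prod.cong) (auto simp: i0_def)
  finally have "pair_weight m (Suc j) = (2 * i0 - 2) * R" .
  moreover have "pair_weight m j = (2 * i0 - 1) * R"
    unfolding pair_weight_def R_def using assms by (subst prod.remove[OF _ i0]) (auto simp: i0_def)
  ultimately show ?thesis by (simp add: i0_def)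
qed

lemma matching_delivery_design:
  assumes "1 \<le> m" "2 * m \<le> K" "even K"
  shows "delivery_design K (2 * m) (matching_weight m) (matching_weight m)"
  unfolding delivery_design_def
proof (intro ballI conjI)
  fix B assume B: "B \<in> user_subsets K (2 * m - 1)"
  have fin: "finite B" and pos: "\<And>v. v \<in> B \<Longrightarrow> v \<ge> 1"
    using B rev_finite_subset[OF finite_atLeastAtMost, of B 1 K] by auto
  define j where "j = matched_count B div 2"
  have Bj: "matched_count B = 2 * j"
    using matched_count_even[OF fin pos] by (simp add: j_def)
  have "j < m" using matched_count_le[OF fin] B Bj assms(1) by simp
  define S where "S = {1..K} - B"
  have card_S: "card S = K - 2 * m + 1"
    using card_compl_user_subset[OF B] assms(1,2) by (simp add: S_def)
  have weight: "matching_weight m (insert u B)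
      = (if partner u \<in> B then pair_weight m (Suc j) else pair_weight m j)" if "u \<in> S" for u
    using that Bj matched_count_insert[OF _ _ pos fin, of u] by (auto simp: S_def)
  show "matching_weight m (insert u B) \<le> matching_weight m B"
    if "u \<in> {1..K} - B" for u
    using weight[of u] that pair_weight_le[of j "Suc j" m] by (simp add: S_def j_def)
  \<comment> \<open>The \<open>a\<close> users outside \<open>B\<close> whose partner lies in \<open>B\<close> complete a pair, and
    \<open>pair_weight_step\<close> turns the total weight into \<open>(K - 2 m) * pair_weight m j\<close>.\<close>
  define a where "a = card {u\<in>S. partner u \<in> B}"
  have a: "a = 2 * (m - j) - 1"
    using card_partner_in[of B K] B Bj \<open>j < m\<close> assms(3) by (simp add: a_def S_def)
  have "a \<le> card S" unfolding a_def S_def by (rule card_mono) auto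
  have "card {u\<in>S. partner u \<notin> B} = card S - a"
  proof -
    have "{u\<in>S. partner u \<notin> B} = S - {u\<in>S. partner u \<in> B}" by auto
    moreover have "finite {u\<in>S. partner u \<in> B}" by (simp add: S_def)
    ultimately show ?thesis by (simp add: card_Diff_subset a_def)
  qed
  then have "(\<Sum>u\<in>S. matching_weight m (insert u B))
      = a * pair_weight m (Suc j) + (card S - a) * pair_weight m j"
    using weight by (simp add: sum.If_cases a_def S_def Int_def)
  also have "a * pair_weight m (Suc j) = (a - 1) * pair_weight m j"
  proof -
    have "a - 1 = 2 * (m - j) - 2" using a by simp
    then show ?thesis using pair_weight_step[OF \<open>j < m\<close>] a by simp
  qed
  also have "(a - 1) * pair_weight m j + (card S - a) * pair_weight m j
      = (K - 2 * m) * pair_weight m j"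
  proof -
    have "a - 1 + (card S - a) = K - 2 * m" using \<open>a \<le> card S\<close> card_S a \<open>j < m\<close> by linarith
    then show ?thesis by (simp add: add_mult_distrib[symmetric])
  qed
  finally show "(\<Sum>u\<in>{1..K} - B. matching_weight m (insert u B))
      = (K - 2 * m) * matching_weight m B"
    by (simp add: S_def j_def)
qed

lemma matching_subpacketization_le:
  "(\<Sum>A\<in>user_subsets K (2 * m). matching_weight m A) \<le> (K choose (2 * m)) * pair_weight m 0"
proof -
  have "(\<Sum>A\<in>user_subsets K (2 * m). matching_weight m A)
      \<le> (\<Sum>A\<in>user_subsets K (2 * m). pair_weight m 0)"
    by (intro sum_mono pair_weight_le) simp
  then show ?thesis using card_user_subsets[of K "2 * m"] by simp
qed

lemma matching_subpacketization_pos: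
  assumes "4 * m \<le> K"
  shows "(\<Sum>A\<in>user_subsets K (2 * m). matching_weight m A) > 0"
proof -
  \<comment> \<open>\<open>2 m\<close> odd users, no two of them partners\<close>
  define A where "A = (\<lambda>i. 2 * i + 1) ` {..<2 * m}"
  have "inj_on (\<lambda>i::nat. 2 * i + 1) {..<2 * m}" by (auto simp: inj_on_def)
  then have "A \<in> user_subsets K (2 * m)" using assms by (auto simp: A_def card_image)
  moreover have "matched_count A = 0"
    by (auto simp: matched_count_def A_def partner_def)
  ultimately have "pair_weight m 0 \<le> (\<Sum>A\<in>user_subsets K (2 * m). matching_weight m A)"
    using member_le_sum[of A "user_subsets K (2 * m)" "matching_weight m"]
    by (simp add: finite_user_subsets)
  then show ?thesis using pair_weight_0_pos[of m] by linarith
qed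

lemma matching_achievable:
  assumes "N \<ge> 1" "1 \<le> m" "4 * m \<le> K" "even K" "real (K - 2 * m) = real K * M / real N"
  shows "D2D_achievable N K M (real (2 * m) / real (K - 2 * m))
           (\<Sum>A\<in>user_subsets K (2 * m). matching_weight m A)"
  using assms
  by (intro D2D_achievable_from_design[where X = "matching_weight m"]
      matching_delivery_design matching_cache_balanced matching_subpacketization_pos) auto

lemma better_of_two_subpacketizations:
  fixes F C w t :: nat
  assumes "P F" "P (t * C)" "0 < F" "F \<le> C * w" "0 < C" "0 < t"
  shows "\<exists>F'. F' > 0 \<and> P F' \<and> F' \<le> t * C \<and>
           real F' / real (t * C) \<le> min (1 / real t * real w) 1"
proof (cases "w \<le> t")
  case True
  then have "F \<le> t * C" using assms(4) by (metis mult.commute mult_le_mono2 order_trans)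
  have "real F / real (t * C) \<le> real (C * w) / real (t * C)"
    using assms(4) by (intro divide_right_mono) (simp_all del: of_nat_mult)
  also have "\<dots> = 1 / real t * real w" using assms(5) by simp
  finally show ?thesis
    using \<open>F \<le> t * C\<close> assms(1,3)
    by (intro exI[of _ F]) (auto simp: divide_le_eq_1 simp flip: of_nat_mult)
next
  case False
  then show ?thesis using assms(2,5,6) by (intro exI[of _ "t * C"]) (auto simp: field_simps)
qed

theorem theorem1:
  fixes N K t :: nat and M :: real
  assumes "N \<ge> 1" and "K \<ge> 4" and "even K"
    and "0 < M" and "M \<le> real N"
    and "real t = real K * M / real N" and "t > 0"
    and "even (K - t)" and "2 \<le> K - t" and "2 * (K - t) \<le> K"
  shows "\<exists>F::nat. F > 0 \<and> D2D_achievable N K M (real N / M - 1) F \<and>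
           F \<le> F_JCM K t \<and>
           real F / real (F_JCM K t)
             \<le> min ((1 / real t) * (\<Prod>i=1..(K - t) div 2. real (2 * i - 1))) 1"
proof -
  define m where "m = (K - t) div 2"
  have m: "K - 2 * m = t" "1 \<le> m" "4 * m \<le> K" "2 * m < K"
    using assms(7-10) by (auto simp: m_def)
  have rate: "real N / M - 1 = real (2 * m) / real (K - 2 * m)"
  proof -
    have "real N / M = real K / real t" using assms(1,4,6,7) by (simp add: field_simps)
    moreover have "real K = real t + real (2 * m)" using m(1,4) by linarith
    ultimately show ?thesis unfolding m(1) using assms(7) by (simp add: field_simps)
  qed
  have jcm: "F_JCM K t = t * (K choose (2 * m))"
    using binomial_symmetric[of "2 * m" K] m by (simp add: F_JCM_def)
  have w: "(\<Prod>i=1..(K - t) div 2. real (2 * i - 1)) = real (pair_weight m 0)"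
    unfolding pair_weight_0 m_def[symmetric] of_nat_prod ..
  have "D2D_achievable N K M (real N / M - 1) (\<Sum>A\<in>user_subsets K (2 * m). matching_weight m A)"
    using matching_achievable[OF assms(1) m(2,3) assms(3)] m(1) assms(6) unfolding rate by simp
  moreover have "D2D_achievable N K M (real N / M - 1) (t * (K choose (2 * m)))"
    using jcm_achievable[OF assms(1) _ m(4), of M] m(1,2) assms(6) unfolding rate by simp
  ultimately show ?thesis
    unfolding jcm w
    by (rule better_of_two_subpacketizations)
      (use matching_subpacketization_pos[OF m(3)]
        matching_subpacketization_le[where K = K and m = m] assms(7) m(4) in auto)
qed

end
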